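(* Let $\kappa_1,\kappa_2$ be real constants, let $\delta\neq 0$ be a real constant, let $F$ be a smooth real function of one variable and let $G$ be any antiderivative of $F$ (i.e. $G'=F$). Consider the system $$\sigma_r+\frac{\kappa_1\sigma}{r}=\delta\,u_{tt},\qquad u_r+\frac{\kappa_2 u}{r}=\frac{1}{\delta}F(\sigma)$$ for smooth functions $\sigma(r,t)$, $u(r,t)$ with $r>0$. Then every smooth solution $(\sigma,u)$ satisfies the three conservation laws $$\partial_r\big(r^{\kappa_1}\sigma\big)+\partial_t\big(-\delta r^{\kappa_1}u_t\big)=0,$$ $$\partial_r\big(r^{\kappa_1}t\sigma\big)+\partial_t\big(\delta r^{\kappa_1}(u-tu_t)\big)=0,$$ $$\partial_r\big(r^{\kappa_1+\kappa_2}u\,\sigma_t\big)+\partial_t\Big(r^{\kappa_1+\kappa_2}\Big(\tfrac{\delta}{2}\big(u_t^2-2uu_{tt}\big)-\tfrac{1}{\delta}G(\sigma)\Big)\Big)=0.$$ These correspond to the multipliers $(\Lambda^1,\Lambda^2)=(r^{\kappa_1},0)$, $(tr^{\kappa_1},0)$ and $(-r^{\kappa_1+\kappa_2}u_t,\ r^{\kappa_1+\kappa_2}\sigma_t)$, respectively, for the equations $\sigma_r+\kappa_1\sigma/r-\delta u_{tt}=0$, $u_r+\kappa_2u/r-F(\sigma)/\delta=0$.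
   Context: Subscripts denote partial derivatives. The system models shear waves in cylindrical geometry, with $\sigma$ the stress and $u$ the displacement and with constitutive relation (strain) $=F(\sigma)$. *)

theory Defs
  imports "HOL-Analysis.Analysis"
begin

definition pd_r :: "(real \<times> real \<Rightarrow> real) \<Rightarrow> real \<times> real \<Rightarrow> real" where
  "pd_r f = (\<lambda>(r, t). deriv (\<lambda>s. f (s, t)) r)"

definition pd_t :: "(real \<times> real \<Rightarrow> real) \<Rightarrow> real \<times> real \<Rightarrow> real" where
  "pd_t f = (\<lambda>(r, t). deriv (\<lambda>s. f (r, s)) t)"

fun iter_pd :: "bool list \<Rightarrow> (real \<times> real \<Rightarrow> real) \<Rightarrow> real \<times> real \<Rightarrow> real" where
  "iter_pd [] f = f"
| "iter_pd (b # bs) f = (if b then pd_r else pd_t) (iter_pd bs f)"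

definition smooth2_on :: "(real \<times> real) set \<Rightarrow> (real \<times> real \<Rightarrow> real) \<Rightarrow> bool" where
  "smooth2_on U f \<longleftrightarrow> (\<forall>ws. \<forall>p\<in>U. iter_pd ws f differentiable (at p))"

definition smooth1 :: "(real \<Rightarrow> real) \<Rightarrow> bool" where
  "smooth1 F \<longleftrightarrow> (\<forall>n x. ((deriv ^^ n) F) differentiable (at x))"

end

theory Submission
  imports Defs
begin

text \<open>For each law the divergence of the flux equals \<open>\<Lambda>\<^sup>1\<close> times the first equation plus
  \<open>\<Lambda>\<^sup>2\<close> times the second, so it vanishes on solutions; this is checked by differentiating the
  flux components and substituting the equations. For the third law the t-derivative of the first
  equation enters through the mixed partial \<open>\<sigma>\<^sub>r\<^sub>t\<close>, so one also needs the symmetry of mixed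
  partial derivatives, which follows from the mean value theorem applied twice to a second
  difference.\<close>

lemma has_real_derivative_pd_r:
  assumes "f differentiable (at (r, t))"
  shows "((\<lambda>s. f (s, t)) has_real_derivative pd_r f (r, t)) (at r)"
proof -
  have "(f \<circ> (\<lambda>s. (s, t))) differentiable (at r)"
    using assms by (intro differentiable_chain_at) simp_all
  then show ?thesis
    by (simp add: o_def pd_r_def DERIV_deriv_iff_real_differentiable)
qed

lemma has_real_derivative_pd_t:
  assumes "f differentiable (at (r, t))"
  shows "((\<lambda>s. f (r, s)) has_real_derivative pd_t f (r, t)) (at t)"
proof -
  have "(f \<circ> (\<lambda>s. (r, s))) differentiable (at t)"
    using assms by (intro differentiable_chain_at) simp_all
  then show ?thesis
    by (simp add: o_def pd_t_def DERIV_deriv_iff_real_differentiable)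
qed

lemma pd_r_eqI:
  assumes "((\<lambda>s. f (s, t)) has_real_derivative D) (at r)"
  shows "pd_r f (r, t) = D"
  using assms by (simp add: pd_r_def DERIV_imp_deriv)

lemma pd_t_eqI:
  assumes "((\<lambda>s. f (r, s)) has_real_derivative D) (at t)"
  shows "pd_t f (r, t) = D"
  using assms by (simp add: pd_t_def DERIV_imp_deriv)

lemma second_difference_mean_value:
  fixes g gx gxy :: "real \<Rightarrow> real \<Rightarrow> real"
  assumes "h > 0"
    and gx: "\<And>x y. a \<le> x \<Longrightarrow> x \<le> a + h \<Longrightarrow> b \<le> y \<Longrightarrow> y \<le> b + h \<Longrightarrow>
               ((\<lambda>x. g x y) has_real_derivative gx x y) (at x)"
    and gxy: "\<And>x y. a \<le> x \<Longrightarrow> x \<le> a + h \<Longrightarrow> b \<le> y \<Longrightarrow> y \<le> b + h \<Longrightarrow>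
               ((\<lambda>y. gx x y) has_real_derivative gxy x y) (at y)"
  obtains \<xi> \<eta> where "a < \<xi>" "\<xi> < a + h" "b < \<eta>" "\<eta> < b + h"
    and "g (a + h) (b + h) - g (a + h) b - g a (b + h) + g a b = h * h * gxy \<xi> \<eta>"
proof -
  have "\<exists>\<xi>. a < \<xi> \<and> \<xi> < a + h \<and>
      (g (a + h) (b + h) - g (a + h) b) - (g a (b + h) - g a b)
        = (a + h - a) * (gx \<xi> (b + h) - gx \<xi> b)"
    by (rule MVT2[of a "a + h" "\<lambda>x. g x (b + h) - g x b" "\<lambda>x. gx x (b + h) - gx x b"])
      (use \<open>h > 0\<close> in \<open>auto intro!: derivative_intros gx\<close>)
  then obtain \<xi> where \<xi>: "a < \<xi>" "\<xi> < a + h"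
    and step_x: "(g (a + h) (b + h) - g (a + h) b) - (g a (b + h) - g a b)
                   = h * (gx \<xi> (b + h) - gx \<xi> b)"
    by auto
  have "\<exists>\<eta>. b < \<eta> \<and> \<eta> < b + h \<and> gx \<xi> (b + h) - gx \<xi> b = (b + h - b) * gxy \<xi> \<eta>"
    by (rule MVT2[of b "b + h" "gx \<xi>" "gxy \<xi>"]) (use \<open>h > 0\<close> \<xi> in \<open>auto intro!: gxy\<close>)
  then obtain \<eta> where \<eta>: "b < \<eta>" "\<eta> < b + h"
    and step_y: "gx \<xi> (b + h) - gx \<xi> b = h * gxy \<xi> \<eta>"
    by auto
  show thesis
    by (rule that[OF \<xi> \<eta>]) (use step_x step_y in \<open>simp add: algebra_simps\<close>)
qed

lemma mixed_partials_meet_in_square: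
  fixes f :: "real \<times> real \<Rightarrow> real"
  assumes "h > 0"
    and diff: "\<And>x y. r \<le> x \<Longrightarrow> x \<le> r + h \<Longrightarrow> t \<le> y \<Longrightarrow> y \<le> t + h \<Longrightarrow>
      f differentiable (at (x, y)) \<and> pd_r f differentiable (at (x, y))
      \<and> pd_t f differentiable (at (x, y))"
  obtains \<xi> \<eta> \<xi>' \<eta>' where "r < \<xi>" "\<xi> < r + h" "t < \<eta>" "\<eta> < t + h"
    and "r < \<xi>'" "\<xi>' < r + h" "t < \<eta>'" "\<eta>' < t + h"
    and "pd_t (pd_r f) (\<xi>, \<eta>) = pd_r (pd_t f) (\<xi>', \<eta>')"
proof -
  define \<Delta> where "\<Delta> = f (r + h, t + h) - f (r + h, t) - f (r, t + h) + f (r, t)"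
  obtain \<xi> \<eta> where \<xi>\<eta>: "r < \<xi>" "\<xi> < r + h" "t < \<eta>" "\<eta> < t + h"
    and \<Delta>_tr: "\<Delta> = h * h * pd_t (pd_r f) (\<xi>, \<eta>)"
  proof (rule second_difference_mean_value[of h r t "\<lambda>x y. f (x, y)" "\<lambda>x y. pd_r f (x, y)"])
    fix x y assume "r \<le> x" "x \<le> r + h" "t \<le> y" "y \<le> t + h"
    with diff show "((\<lambda>x. f (x, y)) has_real_derivative pd_r f (x, y)) (at x)"
      and "((\<lambda>y. pd_r f (x, y)) has_real_derivative pd_t (pd_r f) (x, y)) (at y)"
      by (auto intro: has_real_derivative_pd_r has_real_derivative_pd_t)
  qed (use \<open>h > 0\<close> in \<open>auto simp: \<Delta>_def\<close>)
  obtain \<eta>' \<xi>' where \<xi>\<eta>': "t < \<eta>'" "\<eta>' < t + h" "r < \<xi>'" "\<xi>' < r + h"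
    and \<Delta>_rt: "\<Delta> = h * h * pd_r (pd_t f) (\<xi>', \<eta>')"
  proof (rule second_difference_mean_value[of h t r "\<lambda>y x. f (x, y)" "\<lambda>y x. pd_t f (x, y)"])
    fix y x assume "t \<le> y" "y \<le> t + h" "r \<le> x" "x \<le> r + h"
    with diff show "((\<lambda>y. f (x, y)) has_real_derivative pd_t f (x, y)) (at y)"
      and "((\<lambda>x. pd_t f (x, y)) has_real_derivative pd_r (pd_t f) (x, y)) (at x)"
      by (auto intro: has_real_derivative_pd_r has_real_derivative_pd_t)
  qed (use \<open>h > 0\<close> in \<open>auto simp: \<Delta>_def algebra_simps\<close>)
  show thesis
    by (rule that[OF \<xi>\<eta> \<xi>\<eta>'(3,4,1,2)]) (use \<Delta>_tr \<Delta>_rt \<open>h > 0\<close> in simp)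
qed

lemma pd_r_pd_t_commute:
  fixes f :: "real \<times> real \<Rightarrow> real"
  assumes "open U" "(r, t) \<in> U"
    and "\<And>p. p \<in> U \<Longrightarrow> f differentiable (at p)"
    and "\<And>p. p \<in> U \<Longrightarrow> pd_r f differentiable (at p)"
    and "\<And>p. p \<in> U \<Longrightarrow> pd_t f differentiable (at p)"
    and cont_rt: "isCont (pd_r (pd_t f)) (r, t)"
    and cont_tr: "isCont (pd_t (pd_r f)) (r, t)"
  shows "pd_r (pd_t f) (r, t) = pd_t (pd_r f) (r, t)"
proof -
  have "dist (pd_r (pd_t f) (r, t)) (pd_t (pd_r f) (r, t)) < e" if "e > 0" for e
  proof -
    obtain d0 where d0: "d0 > 0" "ball (r, t) d0 \<subseteq> U"
      using assms(1,2) by (meson openE)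
    obtain d1 where d1: "d1 > 0"
      "\<And>p. dist p (r, t) < d1 \<Longrightarrow> dist (pd_r (pd_t f) p) (pd_r (pd_t f) (r, t)) < e / 2"
      using cont_rt \<open>e > 0\<close> unfolding continuous_at_eps_delta by (meson half_gt_zero)
    obtain d2 where d2: "d2 > 0"
      "\<And>p. dist p (r, t) < d2 \<Longrightarrow> dist (pd_t (pd_r f) p) (pd_t (pd_r f) (r, t)) < e / 2"
      using cont_tr \<open>e > 0\<close> unfolding continuous_at_eps_delta by (meson half_gt_zero)
    define h where "h = min d0 (min d1 d2) / 4"
    have h: "h > 0" "2 * h < d0" "2 * h < d1" "2 * h < d2"
      using d0 d1 d2 by (auto simp: h_def)
    have near: "dist (x, y) (r, t) \<le> 2 * h"
      if "r \<le> x" "x \<le> r + h" "t \<le> y" "y \<le> t + h" for x y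
    proof -
      have "dist (x, y) (r, t) \<le> \<bar>dist x r\<bar> + \<bar>dist y t\<bar>"
        unfolding dist_Pair_Pair by (rule sqrt_sum_squares_le_sum_abs)
      also have "\<dots> \<le> 2 * h"
        using that h by (simp add: dist_real_def)
      finally show ?thesis .
    qed
    have "(x, y) \<in> U" if "r \<le> x" "x \<le> r + h" "t \<le> y" "y \<le> t + h" for x y
      using near[OF that] h d0 by (auto simp: dist_commute)
    then obtain \<xi> \<eta> \<xi>' \<eta>' where \<xi>\<eta>: "r < \<xi>" "\<xi> < r + h" "t < \<eta>" "\<eta> < t + h"
      and \<xi>\<eta>': "r < \<xi>'" "\<xi>' < r + h" "t < \<eta>'" "\<eta>' < t + h"
      and same: "pd_t (pd_r f) (\<xi>, \<eta>) = pd_r (pd_t f) (\<xi>', \<eta>')"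
      using mixed_partials_meet_in_square[OF \<open>h > 0\<close>, of r t f] assms(3-5) by blast
    have "dist (pd_r (pd_t f) (\<xi>', \<eta>')) (pd_r (pd_t f) (r, t)) < e / 2"
      using near[of \<xi>' \<eta>'] \<xi>\<eta>' h by (intro d1(2)) simp
    moreover have "dist (pd_t (pd_r f) (\<xi>, \<eta>)) (pd_t (pd_r f) (r, t)) < e / 2"
      using near[of \<xi> \<eta>] \<xi>\<eta> h by (intro d2(2)) simp
    ultimately show ?thesis
      using dist_triangle_half_l[of "pd_r (pd_t f) (r, t)" "pd_r (pd_t f) (\<xi>', \<eta>')" e
          "pd_t (pd_r f) (r, t)"] same
      by (simp add: dist_commute)
  qed
  then show ?thesis
    by (metis dist_pos_lt less_irrefl)
qed

lemma smooth2_on_differentiable: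
  assumes "smooth2_on U f" "p \<in> U"
  shows "f differentiable (at p)" "pd_r f differentiable (at p)"
    "pd_t f differentiable (at p)" "pd_t (pd_t f) differentiable (at p)"
    "pd_r (pd_t f) differentiable (at p)" "pd_t (pd_r f) differentiable (at p)"
proof -
  have "iter_pd ws f differentiable (at p)" for ws
    using assms unfolding smooth2_on_def by blast
  from this[of "[]"] this[of "[True]"] this[of "[False]"] this[of "[False, False]"]
    this[of "[True, False]"] this[of "[False, True]"]
  show "f differentiable (at p)" "pd_r f differentiable (at p)"
    "pd_t f differentiable (at p)" "pd_t (pd_t f) differentiable (at p)"
    "pd_r (pd_t f) differentiable (at p)" "pd_t (pd_r f) differentiable (at p)"
    by simp_all
qed

lemma smooth2_on_pd_r_pd_t_commute:
  assumes "smooth2_on U f" "open U" "(r, t) \<in> U"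
  shows "pd_r (pd_t f) (r, t) = pd_t (pd_r f) (r, t)"
  using assms(2,3) smooth2_on_differentiable(1-3)[OF assms(1)]
    smooth2_on_differentiable(5,6)[OF assms(1,3), THEN differentiable_imp_continuous_within]
  by (rule pd_r_pd_t_commute)

lemma conservation_law_1:
  fixes \<sigma> u :: "real \<times> real \<Rightarrow> real"
  assumes "r > 0" "\<sigma> differentiable (at (r, t))" "pd_t u differentiable (at (r, t))"
    and eq: "pd_r \<sigma> (r, t) + \<kappa>1 * \<sigma> (r, t) / r = \<delta> * pd_t (pd_t u) (r, t)"
  shows "pd_r (\<lambda>(r, t). r powr \<kappa>1 * \<sigma> (r, t)) (r, t)
       + pd_t (\<lambda>(r, t). - \<delta> * r powr \<kappa>1 * pd_t u (r, t)) (r, t) = 0"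
proof -
  have "pd_r (\<lambda>(r, t). r powr \<kappa>1 * \<sigma> (r, t)) (r, t)
      = r powr \<kappa>1 * (pd_r \<sigma> (r, t) + \<kappa>1 * \<sigma> (r, t) / r)"
    using assms(1,2)
    by (intro pd_r_eqI) (auto intro!: derivative_eq_intros has_real_derivative_pd_r
        simp: powr_diff algebra_simps)
  moreover have "pd_t (\<lambda>(r, t). - \<delta> * r powr \<kappa>1 * pd_t u (r, t)) (r, t)
      = - \<delta> * r powr \<kappa>1 * pd_t (pd_t u) (r, t)"
    using assms(3) by (intro pd_t_eqI) (auto intro!: derivative_eq_intros has_real_derivative_pd_t)
  ultimately show ?thesis
    by (simp add: eq algebra_simps)
qed

lemma conservation_law_2:
  fixes \<sigma> u :: "real \<times> real \<Rightarrow> real"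
  assumes "r > 0" "\<sigma> differentiable (at (r, t))"
    "u differentiable (at (r, t))" "pd_t u differentiable (at (r, t))"
    and eq: "pd_r \<sigma> (r, t) + \<kappa>1 * \<sigma> (r, t) / r = \<delta> * pd_t (pd_t u) (r, t)"
  shows "pd_r (\<lambda>(r, t). r powr \<kappa>1 * t * \<sigma> (r, t)) (r, t)
       + pd_t (\<lambda>(r, t). \<delta> * r powr \<kappa>1 * (u (r, t) - t * pd_t u (r, t))) (r, t) = 0"
proof -
  have "pd_r (\<lambda>(r, t). r powr \<kappa>1 * t * \<sigma> (r, t)) (r, t)
      = t * r powr \<kappa>1 * (pd_r \<sigma> (r, t) + \<kappa>1 * \<sigma> (r, t) / r)"
    using assms(1,2)
    by (intro pd_r_eqI) (auto intro!: derivative_eq_intros has_real_derivative_pd_r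
        simp: powr_diff algebra_simps)
  moreover have "pd_t (\<lambda>(r, t). \<delta> * r powr \<kappa>1 * (u (r, t) - t * pd_t u (r, t))) (r, t)
      = - \<delta> * r powr \<kappa>1 * t * pd_t (pd_t u) (r, t)"
    using assms(3,4)
    by (intro pd_t_eqI) (auto intro!: derivative_eq_intros has_real_derivative_pd_t
        simp: algebra_simps)
  ultimately show ?thesis
    by (simp add: eq algebra_simps)
qed

lemma pd_t_pd_r_first_equation:
  fixes \<sigma> u :: "real \<times> real \<Rightarrow> real"
  assumes "r > 0" "\<sigma> differentiable (at (r, t))" "pd_t (pd_t u) differentiable (at (r, t))"
    and eq: "\<And>s. pd_r \<sigma> (r, s) + \<kappa>1 * \<sigma> (r, s) / r = \<delta> * pd_t (pd_t u) (r, s)"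
  shows "pd_t (pd_r \<sigma>) (r, t) + \<kappa>1 * pd_t \<sigma> (r, t) / r = \<delta> * pd_t (pd_t (pd_t u)) (r, t)"
proof -
  have "(\<lambda>s. pd_r \<sigma> (r, s)) = (\<lambda>s. \<delta> * pd_t (pd_t u) (r, s) - \<kappa>1 * \<sigma> (r, s) / r)"
    by (intro ext) (simp add: eq eq_diff_eq)
  then have "pd_t (pd_r \<sigma>) (r, t) = \<delta> * pd_t (pd_t (pd_t u)) (r, t) - \<kappa>1 * pd_t \<sigma> (r, t) / r"
    using assms(1-3)
    by (intro pd_t_eqI) (auto intro!: derivative_eq_intros has_real_derivative_pd_t)
  then show ?thesis
    by simp
qed

lemma conservation_law_3:
  fixes \<sigma> u :: "real \<times> real \<Rightarrow> real"
  assumes "r > 0"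
    and "\<sigma> differentiable (at (r, t))" "pd_t \<sigma> differentiable (at (r, t))"
    and "u differentiable (at (r, t))" "pd_t u differentiable (at (r, t))"
    and "pd_t (pd_t u) differentiable (at (r, t))"
    and G: "(G has_real_derivative F (\<sigma> (r, t))) (at (\<sigma> (r, t)))"
    and eq1_t: "pd_r (pd_t \<sigma>) (r, t) + \<kappa>1 * pd_t \<sigma> (r, t) / r
                  = \<delta> * pd_t (pd_t (pd_t u)) (r, t)"
    and eq2: "pd_r u (r, t) + \<kappa>2 * u (r, t) / r = (1 / \<delta>) * F (\<sigma> (r, t))"
  shows "pd_r (\<lambda>(r, t). r powr (\<kappa>1 + \<kappa>2) * u (r, t) * pd_t \<sigma> (r, t)) (r, t)
       + pd_t (\<lambda>(r, t). r powr (\<kappa>1 + \<kappa>2) *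
             ((\<delta> / 2) * ((pd_t u (r, t))\<^sup>2 - 2 * u (r, t) * pd_t (pd_t u) (r, t))
              - (1 / \<delta>) * G (\<sigma> (r, t)))) (r, t) = 0"
proof -
  have flux_r: "pd_r (\<lambda>(r, t). r powr (\<kappa>1 + \<kappa>2) * u (r, t) * pd_t \<sigma> (r, t)) (r, t)
      = (\<kappa>1 + \<kappa>2) * (r powr (\<kappa>1 + \<kappa>2) / r) * u (r, t) * pd_t \<sigma> (r, t)
        + r powr (\<kappa>1 + \<kappa>2) * pd_r u (r, t) * pd_t \<sigma> (r, t)
        + r powr (\<kappa>1 + \<kappa>2) * u (r, t) * pd_r (pd_t \<sigma>) (r, t)"
    using assms(1-5)
    by (intro pd_r_eqI) (auto intro!: derivative_eq_intros has_real_derivative_pd_r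
        simp: powr_diff algebra_simps)
  have G_t: "((\<lambda>s. G (\<sigma> (r, s))) has_real_derivative F (\<sigma> (r, t)) * pd_t \<sigma> (r, t)) (at t)"
    using G has_real_derivative_pd_t[OF assms(2)] by (rule DERIV_chain2)
  \<comment> \<open>The factor \<open>1 / \<delta>\<close> is generalised to \<open>c\<close>: as a literal quotient it would make
    the quotient rule demand \<open>\<delta> \<noteq> 0\<close>.\<close>
  have flux_t: "pd_t (\<lambda>(r, t). r powr (\<kappa>1 + \<kappa>2) *
             ((\<delta> / 2) * ((pd_t u (r, t))\<^sup>2 - 2 * u (r, t) * pd_t (pd_t u) (r, t))
              - c * G (\<sigma> (r, t)))) (r, t)
      = r powr (\<kappa>1 + \<kappa>2) * (- \<delta> * u (r, t) * pd_t (pd_t (pd_t u)) (r, t)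
          - c * F (\<sigma> (r, t)) * pd_t \<sigma> (r, t))" for c
    using assms(4-6)
    by (intro pd_t_eqI) (auto intro!: derivative_eq_intros has_real_derivative_pd_t G_t
        simp: algebra_simps power2_eq_square)
  have u_r: "pd_r u (r, t) = (1 / \<delta>) * F (\<sigma> (r, t)) - \<kappa>2 * u (r, t) / r"
    using eq2 by (simp add: eq_diff_eq)
  have \<sigma>_tr: "pd_r (pd_t \<sigma>) (r, t) = \<delta> * pd_t (pd_t (pd_t u)) (r, t) - \<kappa>1 * pd_t \<sigma> (r, t) / r"
    using eq1_t by (simp add: eq_diff_eq)
  show ?thesis
    unfolding flux_r flux_t u_r \<sigma>_tr using \<open>r > 0\<close> by (simp add: field_simps)
qed

theorem mainTheorem1:
  fixes \<kappa>1 \<kappa>2 \<delta> :: real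
    and F G :: "real \<Rightarrow> real"
    and \<sigma> u :: "real \<times> real \<Rightarrow> real"
  assumes "\<delta> \<noteq> 0"
    and "smooth1 F"
    and "\<And>x. (G has_real_derivative F x) (at x)"
    and "smooth2_on {p. fst p > 0} \<sigma>"
    and "smooth2_on {p. fst p > 0} u"
    and "\<And>r t. r > 0 \<Longrightarrow>
           pd_r \<sigma> (r, t) + \<kappa>1 * \<sigma> (r, t) / r = \<delta> * pd_t (pd_t u) (r, t)"
    and "\<And>r t. r > 0 \<Longrightarrow>
           pd_r u (r, t) + \<kappa>2 * u (r, t) / r = (1 / \<delta>) * F (\<sigma> (r, t))"
  shows "(\<forall>r t. r > 0 \<longrightarrow>
           pd_r (\<lambda>(r, t). r powr \<kappa>1 * \<sigma> (r, t)) (r, t)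
         + pd_t (\<lambda>(r, t). - \<delta> * r powr \<kappa>1 * pd_t u (r, t)) (r, t) = 0)
    \<and> (\<forall>r t. r > 0 \<longrightarrow>
           pd_r (\<lambda>(r, t). r powr \<kappa>1 * t * \<sigma> (r, t)) (r, t)
         + pd_t (\<lambda>(r, t). \<delta> * r powr \<kappa>1 * (u (r, t) - t * pd_t u (r, t))) (r, t) = 0)
    \<and> (\<forall>r t. r > 0 \<longrightarrow>
           pd_r (\<lambda>(r, t). r powr (\<kappa>1 + \<kappa>2) * u (r, t) * pd_t \<sigma> (r, t)) (r, t)
         + pd_t (\<lambda>(r, t). r powr (\<kappa>1 + \<kappa>2) *
               ((\<delta> / 2) * ((pd_t u (r, t))\<^sup>2 - 2 * u (r, t) * pd_t (pd_t u) (r, t))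
                - (1 / \<delta>) * G (\<sigma> (r, t)))) (r, t) = 0)"
proof -
  have U: "open {p :: real \<times> real. fst p > 0}"
    by (intro open_Collect_less continuous_intros)
  have \<sigma>_diff: "\<sigma> differentiable (at (r, t))" "pd_t \<sigma> differentiable (at (r, t))"
    and u_diff: "u differentiable (at (r, t))" "pd_t u differentiable (at (r, t))"
      "pd_t (pd_t u) differentiable (at (r, t))"
    if "r > 0" for r t
    using smooth2_on_differentiable[OF assms(4)] smooth2_on_differentiable[OF assms(5)] that
    by simp_all
  have eq1_t: "pd_r (pd_t \<sigma>) (r, t) + \<kappa>1 * pd_t \<sigma> (r, t) / r = \<delta> * pd_t (pd_t (pd_t u)) (r, t)"
    if "r > 0" for r t
    using pd_t_pd_r_first_equation[OF that \<sigma>_diff(1)[OF that] u_diff(3)[OF that]] assms(6)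
      smooth2_on_pd_r_pd_t_commute[OF assms(4) U] that
    by simp
  show ?thesis
    by (intro conjI allI impI conservation_law_1 conservation_law_2 conservation_law_3[where F = F])
      (simp_all add: \<sigma>_diff u_diff eq1_t assms(3,6,7))
qed

end
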